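(* Let $Q$ be a quantale, $M$ a $Q$-module, $\mathcal{B}\in\operatorname{mF}(Q)$ binormal over $M$ and $\mathcal{F}\in\operatorname{mF}(Q)$ 1-step over $M$. Then $\mathcal{B}+\mathcal{F}$ is 1-step over $M$.
   Context: A quantale is a poset $Q$ with all nonempty joins $\sum$ (no bottom required), top $1$, commutative associative multiplication with unit $1$ distributing over nonempty joins; a $Q$-module is a poset $M$ with all nonempty joins and an associative unital action distributing over nonempty joins in each variable. An m-filter is a subset of $Q$ containing $1$, upward closed and closed under multiplication; $\mathcal{B}+\mathcal{F}$ is the smallest m-filter containing $\mathcal{B}\cup\mathcal{F}$. Write $x\le^*\sum_ix_i$ if $x\le\sum_{i\in I_0}x_i$ for some finite nonempty $I_0$. For $a,b\in M$: $a\preceq^1_\mathcal{F}b$ means there are families $(a_i)$ in $M$, $(s_i)$ in $\mathcal{F}$ with $a\le\sum a_i$ and $s_ia_i\le b$; $a\preceq^n_\mathcal{F}b$ means a chain of $n$ such steps; $a\preceq_\mathcal{F}b$ means $a\preceq^n_\mathcal{F}b$ for some $n\ge1$. $\mathcal{F}$ is localizable over $M$ if for each $b$ there is $n_b$ with $a\preceq_\mathcal{F}b\Rightarrow a\preceq^{n_b}_\mathcal{F}b$; 1-step over $M$ if localizable and $a\preceq_\mathcal{F}b\Rightarrow a\preceq^1_\mathcal{F}b$. $\mathcal{N}$ is normal over $M$ if for all $s\in\mathcal{N}$, $m\in M$, families $(m_i)$ with $sm\le\sum_im_i$, there exist families $(m'_j)$ in $M$, $(s_j)$ in $\mathcal{N}$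 with $m\le\sum_jm'_j$ and $s_jm'_j\le^*\sum_im_i$. $\mathcal{C}$ is conormal over $M$ if for all $m,n\in M$ with $m\preceq^1_\mathcal{C}n$ there is $s\in\mathcal{C}$ with $sm\le n$. $\mathcal{B}$ is binormal over $M$ if it is both normal and conormal over $M$. *)

theory Defs
  imports Main
begin

text \<open>Orders of Q and M are the type-class orders of the carrier types 'q and 'm;
  the carriers are the whole types.  Families are represented by their sets of
  values (resp. sets of index-paired values); joins only depend on these.\<close>

definition is_lub :: "'a::order set \<Rightarrow> 'a \<Rightarrow> bool" where
  "is_lub A x \<longleftrightarrow> (\<forall>a\<in>A. a \<le> x) \<and> (\<forall>y. (\<forall>a\<in>A. a \<le> y) \<longrightarrow> x \<le> y)"

definition ne_complete :: "'a::order set \<Rightarrow> bool" where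
  "ne_complete U \<longleftrightarrow> (\<forall>A. A \<subseteq> U \<longrightarrow> A \<noteq> {} \<longrightarrow> (\<exists>x. is_lub A x))"

definition jn :: "'a::order set \<Rightarrow> 'a" where
  "jn A = (THE x. is_lub A x)"

definition quantale :: "('q::order \<Rightarrow> 'q \<Rightarrow> 'q) \<Rightarrow> 'q \<Rightarrow> bool" where
  "quantale mul e \<longleftrightarrow>
     ne_complete (UNIV :: 'q set) \<and>
     (\<forall>x. x \<le> e) \<and>
     (\<forall>x y z. mul (mul x y) z = mul x (mul y z)) \<and>
     (\<forall>x y. mul x y = mul y x) \<and>
     (\<forall>x. mul e x = x) \<and>
     (\<forall>a A. A \<noteq> {} \<longrightarrow> mul a (jn A) = jn (mul a ` A)) \<and>
     (\<forall>a A. A \<noteq> {} \<longrightarrow> mul (jn A) a = jn ((\<lambda>x. mul x a) ` A))"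

definition qmodule :: "('q::order \<Rightarrow> 'q \<Rightarrow> 'q) \<Rightarrow> 'q \<Rightarrow> ('q \<Rightarrow> 'm::order \<Rightarrow> 'm) \<Rightarrow> bool" where
  "qmodule mul e act \<longleftrightarrow>
     ne_complete (UNIV :: 'm set) \<and>
     (\<forall>s t m. act (mul s t) m = act s (act t m)) \<and>
     (\<forall>m. act e m = m) \<and>
     (\<forall>s A. A \<noteq> {} \<longrightarrow> act s (jn A) = jn (act s ` A)) \<and>
     (\<forall>S m. S \<noteq> {} \<longrightarrow> act (jn S) m = jn ((\<lambda>s. act s m) ` S))"

definition mfilter :: "('q::order \<Rightarrow> 'q \<Rightarrow> 'q) \<Rightarrow> 'q \<Rightarrow> 'q set \<Rightarrow> bool" where
  "mfilter mul e F \<longleftrightarrow> e \<in> F \<and> (\<forall>x y. x \<in> F \<longrightarrow> x \<le> y \<longrightarrow> y \<in> F) \<and>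
     (\<forall>x\<in>F. \<forall>y\<in>F. mul x y \<in> F)"

definition filter_sum :: "('q::order \<Rightarrow> 'q \<Rightarrow> 'q) \<Rightarrow> 'q \<Rightarrow> 'q set \<Rightarrow> 'q set \<Rightarrow> 'q set" where
  "filter_sum mul e B F = \<Inter> {G. mfilter mul e G \<and> B \<union> F \<subseteq> G}"

definition le_star :: "'m::order \<Rightarrow> 'm set \<Rightarrow> bool" where
  "le_star x X \<longleftrightarrow> (\<exists>X0. X0 \<subseteq> X \<and> finite X0 \<and> X0 \<noteq> {} \<and> x \<le> jn X0)"

definition prec1 :: "('q \<Rightarrow> 'm::order \<Rightarrow> 'm) \<Rightarrow> 'q set \<Rightarrow> 'm \<Rightarrow> 'm \<Rightarrow> bool" where
  "prec1 act F a b \<longleftrightarrow> (\<exists>P. P \<noteq> {} \<and> P \<subseteq> UNIV \<times> F \<and> a \<le> jn (fst ` P) \<and>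
      (\<forall>(x, s)\<in>P. act s x \<le> b))"

fun precn :: "('q \<Rightarrow> 'm::order \<Rightarrow> 'm) \<Rightarrow> 'q set \<Rightarrow> nat \<Rightarrow> 'm \<Rightarrow> 'm \<Rightarrow> bool" where
  "precn act F 0 a b \<longleftrightarrow> a = b"
| "precn act F (Suc n) a b \<longleftrightarrow> (\<exists>c. prec1 act F a c \<and> precn act F n c b)"

definition prec :: "('q \<Rightarrow> 'm::order \<Rightarrow> 'm) \<Rightarrow> 'q set \<Rightarrow> 'm \<Rightarrow> 'm \<Rightarrow> bool" where
  "prec act F a b \<longleftrightarrow> (\<exists>n\<ge>1. precn act F n a b)"

definition localizable :: "('q \<Rightarrow> 'm::order \<Rightarrow> 'm) \<Rightarrow> 'q set \<Rightarrow> bool" where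
  "localizable act F \<longleftrightarrow> (\<forall>b. \<exists>nb\<ge>1. \<forall>a. prec act F a b \<longrightarrow> precn act F nb a b)"

definition one_step :: "('q \<Rightarrow> 'm::order \<Rightarrow> 'm) \<Rightarrow> 'q set \<Rightarrow> bool" where
  "one_step act F \<longleftrightarrow> localizable act F \<and> (\<forall>a b. prec act F a b \<longrightarrow> prec1 act F a b)"

definition normal :: "('q \<Rightarrow> 'm::order \<Rightarrow> 'm) \<Rightarrow> 'q set \<Rightarrow> bool" where
  "normal act N \<longleftrightarrow> (\<forall>s\<in>N. \<forall>m X. X \<noteq> {} \<longrightarrow> act s m \<le> jn X \<longrightarrow>
      (\<exists>P. P \<noteq> {} \<and> P \<subseteq> UNIV \<times> N \<and> m \<le> jn (fst ` P) \<and>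
           (\<forall>(m', t)\<in>P. le_star (act t m') X)))"

definition conormal :: "('q \<Rightarrow> 'm::order \<Rightarrow> 'm) \<Rightarrow> 'q set \<Rightarrow> bool" where
  "conormal act C \<longleftrightarrow> (\<forall>m n. prec1 act C m n \<longrightarrow> (\<exists>s\<in>C. act s m \<le> n))"

definition binormal :: "('q \<Rightarrow> 'm::order \<Rightarrow> 'm) \<Rightarrow> 'q set \<Rightarrow> bool" where
  "binormal act B \<longleftrightarrow> normal act B \<and> conormal act B"

end

theory Submission
  imports Defs
begin

(* B + F is the set of all s lying above some product t f with t in B and f in F.  A
   (B+F)-step a \<preceq>1 b factors as an F-step followed by a B-step, through the join of all x
   that B moves below b.  Conversely an F-step followed by a B-step is a (B+F)-step by
   conormality of B, and so is a B-step followed by an F-step by normality of B.  Two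
   (B+F)-steps FB FB can therefore be rearranged as F (BF) B = F (FB) B, and collapsing FF to F
   (F is 1-step) and BB to B (conormality again) leaves a single (B+F)-step. *)

lemma is_lub_unique: "is_lub A x \<Longrightarrow> is_lub A y \<Longrightarrow> x = (y::'a::order)"
  unfolding is_lub_def by (blast intro: order.antisym)

lemma jn_is_lub:
  fixes A :: "'a::order set"
  assumes "ne_complete (UNIV::'a set)" "A \<noteq> {}"
  shows "is_lub A (jn A)"
proof -
  obtain x where x: "is_lub A x"
    using assms(1)[unfolded ne_complete_def, rule_format, of A] assms(2) by auto
  show ?thesis unfolding jn_def
    by (rule theI[where P = "is_lub A", OF x]) (rule is_lub_unique[OF _ x])
qed

lemma jn_upper:
  fixes A :: "'a::order set"
  assumes "ne_complete (UNIV::'a set)" "x \<in> A"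
  shows "x \<le> jn A"
  using jn_is_lub[OF assms(1), of A] assms(2) unfolding is_lub_def by blast

lemma jn_least:
  fixes A :: "'a::order set"
  assumes "ne_complete (UNIV::'a set)" "A \<noteq> {}" "\<And>x. x \<in> A \<Longrightarrow> x \<le> y"
  shows "jn A \<le> y"
  using jn_is_lub[OF assms(1,2)] assms(3) unfolding is_lub_def by blast

lemma jn_mono:
  fixes A :: "'a::order set"
  assumes "ne_complete (UNIV::'a set)" "A \<noteq> {}" "A \<subseteq> A'"
  shows "jn A \<le> jn A'"
  using assms(3) by (intro jn_least[OF assms(1,2)] jn_upper[OF assms(1)]) blast

lemma jn_pair_eq:
  fixes x :: "'a::order"
  assumes "ne_complete (UNIV::'a set)" "x \<le> y"
  shows "jn {x, y} = y"
proof -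
  have "is_lub {x, y} y" unfolding is_lub_def using assms(2) by auto
  then show ?thesis using is_lub_unique jn_is_lub[OF assms(1), of "{x, y}"] by simp
qed

lemma mono_if_preserves_jn:
  fixes h :: "'a::order \<Rightarrow> 'b::order"
  assumes "ne_complete (UNIV::'a set)" "ne_complete (UNIV::'b set)"
    and "\<And>A. A \<noteq> {} \<Longrightarrow> h (jn A) = jn (h ` A)"
  shows "mono h"
proof
  fix x y :: 'a assume "x \<le> y"
  then have "h y = h (jn {x, y})" using jn_pair_eq[OF assms(1)] by simp
  also have "\<dots> = jn {h x, h y}" using assms(3)[of "{x, y}"] by simp
  finally show "h x \<le> h y" using jn_upper[OF assms(2), of "h x" "{h x, h y}"] by simp
qed

lemma prec1_of_precn:
  assumes trans: "\<And>a c b. prec1 act S a c \<Longrightarrow> prec1 act S c b \<Longrightarrow> prec1 act S a b"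
  shows "n \<ge> 1 \<Longrightarrow> precn act S n a b \<Longrightarrow> prec1 act S a b"
proof (induction n arbitrary: a)
  case 0
  then show ?case by simp
next
  case (Suc n)
  from Suc.prems obtain c where ac: "prec1 act S a c" and cb: "precn act S n c b" by auto
  show ?case
  proof (cases n)
    case 0
    then show ?thesis using ac cb by simp
  next
    case (Suc m)
    then have "prec1 act S c b" using Suc.IH cb by simp
    then show ?thesis using trans ac by blast
  qed
qed

lemma precn_one: "precn act S 1 a b \<longleftrightarrow> prec1 act S a b"
  by (simp add: One_nat_def)

lemma one_step_iff_prec1_trans:
  "one_step act S \<longleftrightarrow> (\<forall>a c b. prec1 act S a c \<longrightarrow> prec1 act S c b \<longrightarrow> prec1 act S a b)"
proof (intro iffI allI impI)
  fix a c b assume "one_step act S" "prec1 act S a c" "prec1 act S c b"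
  then have "precn act S 2 a b" by (simp add: numeral_2_eq_2) blast
  then have "prec act S a b" unfolding prec_def by (intro exI[of _ 2]) simp
  then show "prec1 act S a b" using \<open>one_step act S\<close> unfolding one_step_def by blast
next
  assume trans: "\<forall>a c b. prec1 act S a c \<longrightarrow> prec1 act S c b \<longrightarrow> prec1 act S a b"
  have prec1: "prec1 act S a b" if ab: "prec act S a b" for a b
  proof -
    obtain n where n: "n \<ge> 1" "precn act S n a b" using ab unfolding prec_def by blast
    show ?thesis by (rule prec1_of_precn[OF _ n]) (use trans in blast)
  qed
  then have "localizable act S"
    unfolding localizable_def precn_one by (intro allI exI[of _ 1]) simp
  with prec1 show "one_step act S" unfolding one_step_def by blast
qed

locale quantale_module =
  fixes mul :: "'q::order \<Rightarrow> 'q \<Rightarrow> 'q" and e :: 'q and act :: "'q \<Rightarrow> 'm::order \<Rightarrow> 'm"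
  assumes quantale: "quantale mul e" and qmodule: "qmodule mul e act"
begin

lemma quantale_complete: "ne_complete (UNIV :: 'q set)"
  using quantale unfolding quantale_def by (elim conjE allE)

lemma module_complete: "ne_complete (UNIV :: 'm set)"
  using qmodule unfolding qmodule_def by (elim conjE allE)

lemma le_unit: "x \<le> e"
  using quantale unfolding quantale_def by (elim conjE allE)

lemma mul_assoc: "mul (mul x y) z = mul x (mul y z)"
  using quantale unfolding quantale_def by (elim conjE allE)

lemma mul_commute: "mul x y = mul y x"
  using quantale unfolding quantale_def by (elim conjE allE)

lemma mul_unit_left: "mul e x = x"
  using quantale unfolding quantale_def by (elim conjE allE)

lemma mul_unit_right: "mul x e = x"
  by (subst mul_commute) (rule mul_unit_left)

lemma mul_left_commute: "mul x (mul y z) = mul y (mul x z)"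
  by (metis mul_assoc mul_commute)

lemma mul_jn: "A \<noteq> {} \<Longrightarrow> mul a (jn A) = jn (mul a ` A)"
  using quantale unfolding quantale_def by meson

lemma act_mul: "act (mul s t) m = act s (act t m)"
  using qmodule unfolding qmodule_def by (elim conjE allE)

lemma act_jn: "A \<noteq> {} \<Longrightarrow> act s (jn A) = jn (act s ` A)"
  using qmodule unfolding qmodule_def by meson

lemma jn_act: "S \<noteq> {} \<Longrightarrow> act (jn S) m = jn ((\<lambda>s. act s m) ` S)"
  using qmodule unfolding qmodule_def by meson

lemma mul_mono_right: "x \<le> y \<Longrightarrow> mul a x \<le> mul a y"
  by (rule monoD[OF mono_if_preserves_jn[where h = "mul a", OF quantale_complete quantale_complete mul_jn]])

lemma mul_mono: "x \<le> y \<Longrightarrow> x' \<le> y' \<Longrightarrow> mul x x' \<le> mul y y'"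
  using mul_mono_right[of x' y' x] mul_mono_right[of x y y'] by (simp add: mul_commute[of _ y'])

lemma mul_le_left: "mul a x \<le> a"
  using mul_mono_right[OF le_unit, of a x] by (simp add: mul_unit_right)

lemma act_mono: "x \<le> y \<Longrightarrow> act s x \<le> act s y"
  by (rule monoD[OF mono_if_preserves_jn[where h = "act s", OF module_complete module_complete act_jn]])

lemma act_mono_scalar: "s \<le> t \<Longrightarrow> act s x \<le> act t x"
  by (rule monoD[OF mono_if_preserves_jn[where h = "\<lambda>s. act s x", OF quantale_complete module_complete jn_act]])

definition moved_below :: "'q set \<Rightarrow> 'm \<Rightarrow> 'm set" where
  "moved_below S b = {x. \<exists>s\<in>S. act s x \<le> b}"

lemma mem_moved_below: "x \<in> moved_below S b \<longleftrightarrow> (\<exists>s\<in>S. act s x \<le> b)"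
  by (simp add: moved_below_def)

lemma prec1_iff: "prec1 act S a b \<longleftrightarrow> moved_below S b \<noteq> {} \<and> a \<le> jn (moved_below S b)"
proof
  assume "prec1 act S a b"
  then obtain P where P: "P \<noteq> {}" "P \<subseteq> UNIV \<times> S" "a \<le> jn (fst ` P)"
    "\<forall>(x, s)\<in>P. act s x \<le> b" unfolding prec1_def by blast
  have sub: "fst ` P \<subseteq> moved_below S b" using P(2,4) unfolding moved_below_def by force
  have ne: "fst ` P \<noteq> {}" using P(1) by simp
  have "a \<le> jn (moved_below S b)"
    using P(3) jn_mono[OF module_complete ne sub] by (rule order.trans)
  then show "moved_below S b \<noteq> {} \<and> a \<le> jn (moved_below S b)" using ne sub by blast
next
  assume h: "moved_below S b \<noteq> {} \<and> a \<le> jn (moved_below S b)"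
  let ?P = "{(x, s). s \<in> S \<and> act s x \<le> b}"
  have fst_P: "fst ` ?P = moved_below S b" unfolding moved_below_def by force
  then have "?P \<noteq> {}" using h by auto
  with h fst_P show "prec1 act S a b" unfolding prec1_def by (intro exI[of _ ?P]) auto
qed

lemma prec1_of_moved_below: "x \<in> moved_below S b \<Longrightarrow> prec1 act S x b"
  unfolding prec1_iff using jn_upper[OF module_complete] by blast

lemma prec1_via_moved_below:
  assumes "prec1 act S a c" and "\<And>x. x \<in> moved_below S c \<Longrightarrow> prec1 act T x b"
  shows "prec1 act T a b"
proof -
  have ne: "moved_below S c \<noteq> {}" and a: "a \<le> jn (moved_below S c)"
    using assms(1) by (auto simp: prec1_iff)
  have "moved_below T b \<noteq> {}" using ne assms(2) by (auto simp: prec1_iff)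
  moreover have "jn (moved_below S c) \<le> jn (moved_below T b)"
    using ne assms(2) by (auto simp: prec1_iff intro: jn_least[OF module_complete])
  ultimately show ?thesis using a by (auto simp: prec1_iff)
qed

lemma prec1_trans_conormal:
  assumes "conormal act C" "prec1 act S a c" "prec1 act C c b"
    and closed: "\<And>t s. t \<in> C \<Longrightarrow> s \<in> S \<Longrightarrow> mul t s \<in> T"
  shows "prec1 act T a b"
proof -
  obtain t where t: "t \<in> C" "act t c \<le> b" using assms(1,3) unfolding conormal_def by blast
  show ?thesis using assms(2)
  proof (rule prec1_via_moved_below)
    fix x assume "x \<in> moved_below S c"
    then obtain s where "s \<in> S" "act s x \<le> c" unfolding moved_below_def by blast
    then have "act (mul t s) x \<le> b" using t(2) act_mono by (metis act_mul order.trans)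
    then show "prec1 act T x b"
      using closed[OF t(1) \<open>s \<in> S\<close>] by (blast intro: prec1_of_moved_below[unfolded moved_below_def])
  qed
qed

lemma mfilter_common_witness:
  assumes "mfilter mul e F" "finite X" "X \<noteq> {}" "X \<subseteq> moved_below F b"
  shows "\<exists>f\<in>F. \<forall>x\<in>X. act f x \<le> b"
  using assms(2-4)
proof (induction X rule: finite_ne_induct)
  case (singleton x)
  then show ?case unfolding moved_below_def by auto
next
  case (insert x X)
  then obtain f where f: "f \<in> F" "\<forall>y\<in>X. act f y \<le> b" by auto
  obtain g where g: "g \<in> F" "act g x \<le> b"
    using insert.prems unfolding moved_below_def by auto
  have "mul f g \<in> F" using assms(1) f(1) g(1) unfolding mfilter_def by blast
  moreover have "act (mul f g) y \<le> b" if "y \<in> insert x X" for y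
  proof (cases "y = x")
    case True
    have "act (mul g f) x \<le> act g x" by (intro act_mono_scalar mul_le_left)
    then show ?thesis using True g(2) mul_commute[of f g] by simp
  next
    case False
    have "act (mul f g) y \<le> act f y" by (intro act_mono_scalar mul_le_left)
    then show ?thesis using False that f(2) by (auto intro: order.trans)
  qed
  ultimately show ?case by blast
qed

lemma moved_below_le_star:
  assumes "mfilter mul e F" "le_star y (moved_below F b)"
  shows "y \<in> moved_below F b"
proof -
  obtain X where X: "X \<subseteq> moved_below F b" "finite X" "X \<noteq> {}" "y \<le> jn X"
    using assms(2) unfolding le_star_def by blast
  obtain f where f: "f \<in> F" "\<forall>x\<in>X. act f x \<le> b"
    using mfilter_common_witness[OF assms(1) X(2,3,1)] by blast
  have "act f y \<le> act f (jn X)" using X(4) by (rule act_mono)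
  also have "\<dots> = jn (act f ` X)" using X(3) by (rule act_jn)
  also have "\<dots> \<le> b" using X(3) f(2) by (auto intro: jn_least[OF module_complete])
  finally show ?thesis using f(1) unfolding moved_below_def by blast
qed

lemma prec1_trans_normal:
  assumes "normal act N" "mfilter mul e F" "prec1 act N a c" "prec1 act F c b"
    and closed: "\<And>t f. t \<in> N \<Longrightarrow> f \<in> F \<Longrightarrow> mul f t \<in> T"
  shows "prec1 act T a b"
  using assms(3)
proof (rule prec1_via_moved_below)
  fix x assume "x \<in> moved_below N c"
  then obtain t where t: "t \<in> N" "act t x \<le> c" unfolding moved_below_def by blast
  have ne: "moved_below F b \<noteq> {}" and c: "c \<le> jn (moved_below F b)"
    using assms(4) by (auto simp: prec1_iff)
  from t(2) c have le: "act t x \<le> jn (moved_below F b)" by (rule order.trans)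
  obtain P where P: "P \<noteq> {}" "P \<subseteq> UNIV \<times> N" "x \<le> jn (fst ` P)"
      "\<forall>(m, u)\<in>P. le_star (act u m) (moved_below F b)"
    using assms(1)[unfolded normal_def, rule_format, OF t(1) ne le] by blast
  have sub: "fst ` P \<subseteq> moved_below T b"
  proof
    fix m assume "m \<in> fst ` P"
    then obtain u where mu: "(m, u) \<in> P" by force
    then have "u \<in> N" using P(2) by blast
    have "le_star (act u m) (moved_below F b)" using P(4) mu by fast
    then have "act u m \<in> moved_below F b" by (rule moved_below_le_star[OF assms(2)])
    then obtain f where "f \<in> F" "act (mul f u) m \<le> b"
      unfolding moved_below_def act_mul by blast
    then show "m \<in> moved_below T b"
      using closed[OF \<open>u \<in> N\<close>] unfolding moved_below_def by blast
  qed
  have ne_P: "fst ` P \<noteq> {}" using P(1) by simp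
  have "x \<le> jn (moved_below T b)"
    using P(3) jn_mono[OF module_complete ne_P sub] by (rule order.trans)
  then show "prec1 act T x b" unfolding prec1_iff using ne_P sub by blast
qed

definition prod_filter :: "'q set \<Rightarrow> 'q set \<Rightarrow> 'q set" where
  "prod_filter B F = {s. \<exists>t\<in>B. \<exists>f\<in>F. mul t f \<le> s}"

lemma mul_mem_prod_filter: "t \<in> B \<Longrightarrow> f \<in> F \<Longrightarrow> mul t f \<in> prod_filter B F"
  unfolding prod_filter_def by blast

lemma mfilter_prod_filter:
  assumes B: "mfilter mul e B" and F: "mfilter mul e F"
  shows "mfilter mul e (prod_filter B F)"
  unfolding mfilter_def
proof (intro conjI allI impI ballI)
  have "e \<in> B" "e \<in> F" using B F unfolding mfilter_def by blast+
  then show "e \<in> prod_filter B F" using mul_mem_prod_filter mul_unit_left by metis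
next
  fix x y assume "x \<in> prod_filter B F" "x \<le> y"
  then obtain t f where "t \<in> B" "f \<in> F" "mul t f \<le> y"
    unfolding prod_filter_def by (blast dest: order.trans)
  then show "y \<in> prod_filter B F" unfolding prod_filter_def by blast
next
  fix x y assume "x \<in> prod_filter B F" "y \<in> prod_filter B F"
  then obtain t f t' f' where tf: "t \<in> B" "f \<in> F" "mul t f \<le> x" "t' \<in> B" "f' \<in> F" "mul t' f' \<le> y"
    unfolding prod_filter_def by blast
  have "mul (mul t t') (mul f f') = mul (mul t f) (mul t' f')"
    by (simp add: mul_assoc mul_left_commute)
  also have "\<dots> \<le> mul x y" by (rule mul_mono[OF tf(3,6)])
  finally have "mul (mul t t') (mul f f') \<le> mul x y" .
  moreover have "mul t t' \<in> B" "mul f f' \<in> F" using tf B F unfolding mfilter_def by blast+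
  ultimately show "mul x y \<in> prod_filter B F" unfolding prod_filter_def by blast
qed

lemma filter_sum_eq_prod_filter:
  assumes B: "mfilter mul e B" and F: "mfilter mul e F"
  shows "filter_sum mul e B F = prod_filter B F"
proof
  have "e \<in> B" "e \<in> F" using B F unfolding mfilter_def by blast+
  then have "B \<union> F \<subseteq> prod_filter B F"
    using mul_mem_prod_filter mul_unit_left mul_unit_right by (metis Un_iff subsetI)
  then show "filter_sum mul e B F \<subseteq> prod_filter B F"
    unfolding filter_sum_def using mfilter_prod_filter[OF B F] by blast
next
  show "prod_filter B F \<subseteq> filter_sum mul e B F"
    unfolding filter_sum_def
  proof (intro Inter_greatest subsetI)
    fix G s assume G: "G \<in> {G. mfilter mul e G \<and> B \<union> F \<subseteq> G}" and "s \<in> prod_filter B F"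
    then obtain t f where "t \<in> G" "f \<in> G" "mul t f \<le> s" unfolding prod_filter_def by blast
    with G show "s \<in> G" unfolding mfilter_def by blast
  qed
qed

lemma prec1_prod_filter_split:
  assumes "prec1 act (prod_filter B F) a b"
  shows "\<exists>c. prec1 act F a c \<and> prec1 act B c b"
proof -
  let ?c = "jn (moved_below B b)"
  have split: "x \<in> moved_below F ?c \<and> moved_below B b \<noteq> {}"
    if x: "x \<in> moved_below (prod_filter B F) b" for x
  proof -
    obtain s t f where "act s x \<le> b" "t \<in> B" "f \<in> F" "mul t f \<le> s"
      using x unfolding moved_below_def prod_filter_def by blast
    have "act t (act f x) = act (mul t f) x" by (simp add: act_mul)
    also have "\<dots> \<le> act s x" using \<open>mul t f \<le> s\<close> by (rule act_mono_scalar)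
    also have "\<dots> \<le> b" by fact
    finally have fx: "act f x \<in> moved_below B b" using \<open>t \<in> B\<close> by (auto simp: mem_moved_below)
    then have "act f x \<le> ?c" by (rule jn_upper[OF module_complete])
    then have "x \<in> moved_below F ?c" using \<open>f \<in> F\<close> by (auto simp: mem_moved_below)
    with fx show ?thesis by blast
  qed
  have "prec1 act F a ?c"
    using assms
  proof (rule prec1_via_moved_below)
    fix x assume "x \<in> moved_below (prod_filter B F) b"
    then show "prec1 act F x ?c" using split by (blast intro: prec1_of_moved_below)
  qed
  moreover have "moved_below B b \<noteq> {}"
    using assms split unfolding prec1_iff by blast
  then have "prec1 act B ?c b" unfolding prec1_iff by simp
  ultimately show ?thesis by blast
qed

lemma prec1_prod_filter_trans:
  assumes B: "mfilter mul e B" "binormal act B" and F: "mfilter mul e F" "one_step act F"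
    and ac: "prec1 act (prod_filter B F) a c" and cb: "prec1 act (prod_filter B F) c b"
  shows "prec1 act (prod_filter B F) a b"
proof -
  have normal: "normal act B" and conormal: "conormal act B"
    using B(2) unfolding binormal_def by auto
  have B_mul: "mul t s \<in> B" if "t \<in> B" "s \<in> B" for t s
    using B(1) that unfolding mfilter_def by blast
  have into_prod: "mul t f \<in> prod_filter B F" "mul f t \<in> prod_filter B F"
    if "t \<in> B" "f \<in> F" for t f
    using mul_mem_prod_filter[OF that] mul_commute[of f t] by simp_all
  obtain x where ax: "prec1 act F a x" and xc: "prec1 act B x c"
    using prec1_prod_filter_split[OF ac] by blast
  obtain y where cy: "prec1 act F c y" and yb: "prec1 act B y b"
    using prec1_prod_filter_split[OF cb] by blast
  have "prec1 act (prod_filter B F) x y"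
    by (rule prec1_trans_normal[OF normal F(1) xc cy into_prod(2)])
  then obtain z where xz: "prec1 act F x z" and zy: "prec1 act B z y"
    using prec1_prod_filter_split by blast
  have "prec1 act F a z"
    using ax xz F(2) unfolding one_step_iff_prec1_trans by blast
  moreover have "prec1 act B z b"
    by (rule prec1_trans_conormal[OF conormal zy yb B_mul])
  ultimately show ?thesis
    by (rule prec1_trans_conormal[OF conormal _ _ into_prod(1)])
qed

end

theorem mainTheorem14:
  fixes mul :: "'q::order \<Rightarrow> 'q \<Rightarrow> 'q" and e :: 'q
    and act :: "'q \<Rightarrow> 'm::order \<Rightarrow> 'm"
    and B F :: "'q set"
  assumes "quantale mul e"
    and "qmodule mul e act"
    and "mfilter mul e B" and "binormal act B"
    and "mfilter mul e F" and "one_step act F"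
  shows "one_step act (filter_sum mul e B F)"
proof -
  interpret quantale_module mul e act using assms(1,2) by unfold_locales
  show ?thesis
    using prec1_prod_filter_trans[OF assms(3-6)]
    unfolding filter_sum_eq_prod_filter[OF assms(3,5)] one_step_iff_prec1_trans by blast
qed

end
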